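(* Let $(X,\mathcal{M},\mu)$ be a measure space with $0<\mu(X)<\infty$, and $\Phi$ an $N^*$-function for which there is a constant $k\ge2$ with $\Phi(kx)=2\Phi(x)$ for all $x>0$. Then for every $f\in L^1(X)$, $$\|f\|_\Phi\le\frac{1}{\mu(X)\,\Phi^{-1}\big(\frac{1}{\mu(X)}\big)}\,\|f\|_{L^1}.$$
   Context: An $N^*$-function is a function $\Phi:\mathbb{R}\to\mathbb{R}$ of the form $\Phi(x)=\int_0^{|x|}p(t)\,dt<+\infty$ for all $x$, where $p:[0,\infty)\to[0,\infty]$ is right-continuous, positive on $(0,\infty)$, non-increasing, and satisfies $\lim_{t\to0^+}p(t)=+\infty$ and $\lim_{t\to+\infty}p(t)=0$. $\Phi^{-1}$ is the inverse of $\Phi|_{[0,\infty)}$. $\|f\|_\Phi=\inf\{\lambda>0:\int_X\Phi(|f|/\lambda)\,d\mu\le1\}$. *)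

theory Defs
  imports "HOL-Analysis.Analysis"
begin

text \<open>The value p 0 (= +oo in the paper) is irrelevant for the integral and is not constrained.\<close>
definition N_star_function :: "(real \<Rightarrow> real) \<Rightarrow> bool" where
  "N_star_function Phi \<longleftrightarrow> (\<exists>p :: real \<Rightarrow> real.
      (\<forall>t>0. p t > 0) \<and>
      (\<forall>s t. 0 < s \<and> s \<le> t \<longrightarrow> p t \<le> p s) \<and>
      (\<forall>t>0. continuous (at_right t) p) \<and>
      filterlim p at_top (at_right 0) \<and>
      (p \<longlongrightarrow> 0) at_top \<and>
      (\<forall>x. set_integrable lborel {0..\<bar>x\<bar>} p \<and>
           Phi x = (LINT t:{0..\<bar>x\<bar>}|lborel. p t)))"

definition Phi_inv :: "(real \<Rightarrow> real) \<Rightarrow> real \<Rightarrow> real" where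
  "Phi_inv Phi y = (THE x. 0 \<le> x \<and> Phi x = y)"

definition orlicz_norm :: "'a measure \<Rightarrow> (real \<Rightarrow> real) \<Rightarrow> ('a \<Rightarrow> real) \<Rightarrow> real" where
  "orlicz_norm M Phi f =
     Inf {c::real. c > 0 \<and> (\<integral>\<^sup>+ x. ennreal (Phi (\<bar>f x\<bar> / c)) \<partial>M) \<le> 1}"

end

theory Submission
  imports Defs
begin

text \<open>Since the density p is non-increasing, Phi is concave on [0,oo): it lies below its
  tangent line Phi a + p a (y - a) at every a > 0, and that line has non-negative intercept
  Phi a - p a * a.  Choosing a = Phi\<inverse>(1/mu(X)) and integrating the tangent bound for
  Phi(|f|/c) gives at most mu(X) Phi a + p a (||f||_1/c - mu(X) a) = 1 + p a (||f||_1/c - mu(X) a),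
  which is at most 1 as soon as c \<ge> ||f||_1 / (mu(X) a).  The doubling condition is only needed
  to see that Phi attains the value 1/mu(X).\<close>

lemma set_integrable_const_greaterThanAtMost:
  "set_integrable lborel {x<..y::real} (\<lambda>_. c::real)"
  unfolding set_integrable_def
  by (cases "x \<le> y") (simp_all add: integrable_indicator_iff)

lemma doubling_iterate:
  fixes F :: "real \<Rightarrow> real"
  assumes "k > 0" "\<And>x. x > 0 \<Longrightarrow> F (k * x) = 2 * F x" "x > 0"
  shows "F (k ^ n * x) = 2 ^ n * F x"
proof (induction n)
  case (Suc n)
  have "F (k * (k ^ n * x)) = 2 * F (k ^ n * x)" using assms by simp
  then show ?case using Suc by (simp add: mult.assoc)
qed simp

locale antimono_primitive =
  fixes p Phi :: "real \<Rightarrow> real"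
  assumes p_pos: "\<And>t. t > 0 \<Longrightarrow> p t > 0"
    and p_antimono: "\<And>s t. 0 < s \<Longrightarrow> s \<le> t \<Longrightarrow> p t \<le> p s"
    and Phi_integral: "\<And>x. set_integrable lborel {0..\<bar>x\<bar>} p \<and> Phi x = (LINT t:{0..\<bar>x\<bar>}|lborel. p t)"
begin

lemma Phi_diff:
  assumes "0 \<le> x" "x \<le> y"
  shows "Phi y - Phi x = (LINT t:{x<..y}|lborel. p t)" and "set_integrable lborel {x<..y} p"
proof -
  have int_y: "set_integrable lborel {0..y} p" using Phi_integral[of y] assms by simp
  show int_xy: "set_integrable lborel {x<..y} p"
    by (rule set_integrable_subset[OF int_y]) (use assms in auto)
  have int_x: "set_integrable lborel {0..x} p"
    by (rule set_integrable_subset[OF int_y]) (use assms in auto)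
  have split: "{0..y} = {0..x} \<union> {x<..y}" using assms by auto
  have "(LINT t:{0..y}|lborel. p t) = (LINT t:{0..x}|lborel. p t) + (LINT t:{x<..y}|lborel. p t)"
    unfolding split by (rule set_integral_Un[OF _ int_x int_xy]) auto
  then show "Phi y - Phi x = (LINT t:{x<..y}|lborel. p t)"
    using Phi_integral[of x] Phi_integral[of y] assms by simp
qed

lemma Phi_diff_le:
  assumes "0 < x" "x \<le> y"
  shows "Phi y - Phi x \<le> p x * (y - x)"
proof -
  have "Phi y - Phi x = (LINT t:{x<..y}|lborel. p t)" using Phi_diff(1) assms by simp
  also have "\<dots> \<le> (LINT t:{x<..y}|lborel. p x)"
    using assms
    by (intro set_integral_mono[OF Phi_diff(2) set_integrable_const_greaterThanAtMost])
       (auto intro: p_antimono)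
  also have "\<dots> = p x * (y - x)" using assms by (subst set_integral_const) auto
  finally show ?thesis .
qed

lemma Phi_diff_ge:
  assumes "0 \<le> x" "x \<le> y"
  shows "p y * (y - x) \<le> Phi y - Phi x"
proof -
  have "p y * (y - x) = (LINT t:{x<..y}|lborel. p y)" using assms by (subst set_integral_const) auto
  also have "\<dots> \<le> Phi y - Phi x"
    unfolding Phi_diff[OF assms] using assms
    by (intro set_integral_mono[OF set_integrable_const_greaterThanAtMost Phi_diff(2)])
       (auto intro: p_antimono)
  finally show ?thesis .
qed

lemma Phi_0: "Phi 0 = 0"
proof -
  have "Phi 0 = (LINT t:{0..0}|lborel. p t)" using Phi_integral[of 0] by simp
  also have "\<dots> = (LINT t:{0..0::real}|lborel. p 0)"
    unfolding set_lebesgue_integral_def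
    by (rule Bochner_Integration.integral_cong) (auto simp: indicator_def)
  also have "\<dots> = 0" by (subst set_integral_const) auto
  finally show ?thesis .
qed

lemma Phi_strict_mono:
  assumes "0 \<le> x" "x < y"
  shows "Phi x < Phi y"
  using Phi_diff_ge[of x y] p_pos[of y] assms by (smt (verit) mult_pos_pos)

lemma Phi_pos: "x > 0 \<Longrightarrow> Phi x > 0"
  using Phi_strict_mono[of 0 x] Phi_0 by simp

lemma Phi_lipschitz_on:
  assumes "0 < a"
  shows "(p a)-lipschitz_on {a..} Phi"
proof (rule lipschitz_onI)
  have "Phi y - Phi x \<le> p a * (y - x)" if "a \<le> x" "x \<le> y" for x y
    using Phi_diff_le[of x y] p_antimono[of a x] that assms
    by (smt (verit) mult_right_mono)
  moreover have "Phi x \<le> Phi y" if "a \<le> x" "x \<le> y" for x y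
    using Phi_strict_mono[of x y] that assms by (cases "x = y") auto
  ultimately show "dist (Phi x) (Phi y) \<le> p a * dist x y" if "x \<in> {a..}" "y \<in> {a..}" for x y
    using that by (cases "x \<le> y") (force simp: dist_real_def)+
  show "0 \<le> p a" using p_pos assms by (simp add: less_imp_le)
qed

lemma Phi_tangent_line:
  assumes "0 < a" "0 \<le> y"
  shows "Phi y \<le> Phi a + p a * (y - a)"
  using Phi_diff_le[of a y] Phi_diff_ge[of y a] assms
  by (cases "a \<le> y") (auto simp: algebra_simps)

lemma tangent_line_intercept_nonneg: "0 < a \<Longrightarrow> p a * a \<le> Phi a"
  using Phi_diff_ge[of 0 a] Phi_0 by simp

lemma Phi_inv_eq:
  assumes "0 \<le> a"
  shows "Phi_inv Phi (Phi a) = a"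
  unfolding Phi_inv_def
proof (rule the_equality)
  fix x assume "0 \<le> x \<and> Phi x = Phi a"
  then show "x = a"
    using Phi_strict_mono[of x a] Phi_strict_mono[of a x] assms by (cases x a rule: linorder_cases) auto
qed (use assms in auto)

lemma Phi_surj_if_doubling:
  assumes "k > 0" and doubling: "\<And>x. x > 0 \<Longrightarrow> Phi (k * x) = 2 * Phi x" and "y > 0"
  obtains a where "a > 0" "Phi a = y"
proof -
  obtain n :: nat where n: "max (Phi 1 / y) (y / Phi 1) < 2 ^ n"
    using real_arch_pow[of 2 "max (Phi 1 / y) (y / Phi 1)"] by auto
  define lo hi where "lo = 1 / k ^ n" and "hi = k ^ n"
  have lo_pos: "lo > 0" unfolding lo_def using assms by simp
  have "Phi 1 = 2 ^ n * Phi lo"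
    using doubling_iterate[of k Phi lo n] assms lo_pos unfolding lo_def by simp
  then have Phi_lo: "Phi lo \<le> y"
    using n Phi_pos[of 1] assms by (simp add: field_simps)
  have "Phi hi = 2 ^ n * Phi 1"
    using doubling_iterate[of k Phi 1 n] assms unfolding hi_def by simp
  then have Phi_hi: "y \<le> Phi hi"
    using n Phi_pos[of 1] assms by (simp add: field_simps)
  have "lo \<le> hi"
    using Phi_strict_mono[of hi lo] Phi_lo Phi_hi lo_pos \<open>k > 0\<close> unfolding hi_def by force
  moreover have "continuous_on {lo..hi} Phi"
    using lipschitz_on_continuous_on[OF Phi_lipschitz_on[OF lo_pos]]
    by (rule continuous_on_subset) auto
  ultimately obtain a where "lo \<le> a" "Phi a = y"
    using IVT'[of Phi lo y hi, OF Phi_lo Phi_hi] by auto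
  with lo_pos show ?thesis by (intro that[of a]) auto
qed

lemma nn_integral_Phi_le_one:
  assumes "finite_measure M" "integrable M f" "0 < a" "measure M (space M) * Phi a = 1"
    and "0 < c" "(\<integral>x. \<bar>f x\<bar> \<partial>M) \<le> c * measure M (space M) * a"
  shows "(\<integral>\<^sup>+ x. ennreal (Phi (\<bar>f x\<bar> / c)) \<partial>M) \<le> 1"
proof -
  interpret finite_measure M by fact
  define m N where "m = measure M (space M)" and "N = (\<integral>x. \<bar>f x\<bar> \<partial>M)"
  define g where "g x = Phi a - p a * a + p a / c * \<bar>f x\<bar>" for x
  have g_nonneg: "g x \<ge> 0" for x
    unfolding g_def using tangent_line_intercept_nonneg[OF \<open>0 < a\<close>] p_pos[of a] assms by simp
  have "(\<integral>\<^sup>+ x. ennreal (Phi (\<bar>f x\<bar> / c)) \<partial>M) \<le> (\<integral>\<^sup>+ x. ennreal (g x) \<partial>M)"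
  proof (rule nn_integral_mono, rule ennreal_leI)
    show "Phi (\<bar>f x\<bar> / c) \<le> g x" for x
      using Phi_tangent_line[of a "\<bar>f x\<bar> / c"] assms by (simp add: g_def algebra_simps)
  qed
  also have "\<dots> = ennreal (m * (Phi a - p a * a) + p a / c * N)"
    using assms g_nonneg unfolding g_def m_def N_def
    by (subst nn_integral_eq_integral) auto
  also have "m * (Phi a - p a * a) + p a / c * N \<le> 1"
  proof -
    have "p a / c * N \<le> p a / c * (c * m * a)"
      using assms p_pos[of a] unfolding m_def N_def by (intro mult_left_mono) auto
    then show ?thesis using assms unfolding m_def by (simp add: algebra_simps)
  qed
  finally show ?thesis by (simp add: ennreal_leI)
qed

end

lemma N_star_functionE:
  assumes "N_star_function Phi"
  obtains p where "antimono_primitive p Phi"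
  using assms unfolding N_star_function_def antimono_primitive_def by blast

lemma orlicz_norm_le:
  assumes "\<And>c. c > c0 \<Longrightarrow> (\<integral>\<^sup>+ x. ennreal (Phi (\<bar>f x\<bar> / c)) \<partial>M) \<le> 1" "c0 \<ge> 0"
  shows "orlicz_norm M Phi f \<le> c0"
proof (rule dense_ge)
  fix c assume "c0 < c"
  moreover have "bdd_below {c. c > 0 \<and> (\<integral>\<^sup>+ x. ennreal (Phi (\<bar>f x\<bar> / c)) \<partial>M) \<le> 1}"
    by (rule bdd_belowI[of _ 0]) auto
  ultimately show "orlicz_norm M Phi f \<le> c"
    unfolding orlicz_norm_def using assms by (intro cInf_lower) auto
qed

theorem mainTheorem11:
  fixes M :: "'a measure" and Phi :: "real \<Rightarrow> real" and f :: "'a \<Rightarrow> real"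
  assumes "0 < emeasure M (space M)" and "emeasure M (space M) < \<infinity>"
    and "N_star_function Phi"
    and "\<exists>k::real. k \<ge> 2 \<and> (\<forall>x>0. Phi (k * x) = 2 * Phi x)"
    and "integrable M f"
  shows "orlicz_norm M Phi f
     \<le> 1 / (measure M (space M) * Phi_inv Phi (1 / measure M (space M)))
        * (\<integral>x. \<bar>f x\<bar> \<partial>M)"
proof -
  obtain p where "antimono_primitive p Phi" using assms(3) by (rule N_star_functionE)
  then interpret antimono_primitive p Phi .
  have M: "finite_measure M" using assms(2) by (intro finite_measureI) auto
  define m where "m = measure M (space M)"
  have "m > 0" unfolding m_def using assms(1) finite_measure.emeasure_eq_measure[OF M] by auto
  obtain k where "k \<ge> 2" "\<And>x. x > 0 \<Longrightarrow> Phi (k * x) = 2 * Phi x" using assms(4) by blast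
  then obtain a where a: "a > 0" "Phi a = 1 / m"
    using Phi_surj_if_doubling[of k "1 / m"] \<open>m > 0\<close> by auto
  have "orlicz_norm M Phi f \<le> 1 / (m * a) * (\<integral>x. \<bar>f x\<bar> \<partial>M)"
  proof (rule orlicz_norm_le)
    fix c assume c: "1 / (m * a) * (\<integral>x. \<bar>f x\<bar> \<partial>M) < c"
    moreover have "0 \<le> 1 / (m * a) * (\<integral>x. \<bar>f x\<bar> \<partial>M)" using \<open>m > 0\<close> a by simp
    ultimately have "c > 0" by linarith
    moreover have "(\<integral>x. \<bar>f x\<bar> \<partial>M) \<le> c * m * a"
      using c \<open>m > 0\<close> a by (simp add: field_simps)
    ultimately show "(\<integral>\<^sup>+ x. ennreal (Phi (\<bar>f x\<bar> / c)) \<partial>M) \<le> 1"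
      using nn_integral_Phi_le_one[OF M assms(5) a(1), of c] a \<open>m > 0\<close>
      unfolding m_def by simp
  qed (use \<open>m > 0\<close> a in simp)
  then show ?thesis using Phi_inv_eq[of a] a unfolding m_def by simp
qed

end
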